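(* Let $X=\{x_1,\dots,x_n\}$ be a finite set of propositional variables and $y\notin X$ a further variable, and let $\mathcal{L}$ be the set of Boolean circuits over $\mathit{PS}=X\cup\{y\}$. Then there exists a rectification operator $\star$ (in the sense defined in the context), and it is unique up to logical equivalence: if $\star$ and $\star'$ are both rectification operators, then $\Sigma\star T\equiv\Sigma\star' T$ for every classification circuit $\Sigma\in\mathcal{L}$ and every $T\in\mathcal{L}$.
   Context: A Boolean circuit over a set of variables $V$ is a directed acyclic graph whose leaves are labelled by variables of $V$ or by the constants $\top$ (=1) and $\bot$ (=0), and whose internal nodes are labelled by $\neg,\wedge,\vee$ or are decision nodes on a variable $v$ (a decision node on $v$ with low child $M$ and high child $P$ stands for $(\neg v\wedge\Phi_M)\vee(v\wedge\Phi_P)$); it is interpreted with the usual semantics of propositional logic. $\equiv$ denotes logical equivalence and $\models$ logical consequence/model satisfaction. Each instance $\vec x\in\{0,1\}^n$ is identified with the canonical term over $X$ containing $x_i$ if the $i$-th coordinate is 1 and $\neg x_i$ otherwise. For a Boolean circuit $\Phi$ and a consistent term $\gamma$, the conditioning $\Phi(\gamma)$ is the circuit obtained by replacing each occurrence of a variable $v$ of $\gamma$ by $\top$ if $v$ is a positive literal of $\gamma$ and by $\bot$ if $\neg v$ is a literal of $\gamma$. A circuit $\Phi\in\mathcal{L}$ classifies $\vec x$ if $\Phi(\vec x)$ has a unique model over $\{y\}$, i.e. $\Phi(\vec x)\equiv y$ (positive instance) or $\Phi(\vec x)\equiv\neg y$ (negative instance); $\Phi$ has the $XY$-classification property (is a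 classification circuit) if it classifies every $\vec x\in\{0,1\}^n$. For $T\in\mathcal{L}$ and $\vec x$, let $F(T,\vec x)=\top$ if $T(\vec x)$ is inconsistent, and otherwise $F(T,\vec x)$ is the conjunction of all literals $\ell\in\{y,\neg y\}$ with $T(\vec x)\models\ell$ (the empty conjunction being $\top$). $\Sigma$ is fact-compliant with $T$ on $\vec x$ if $\Sigma(\vec x)\models F(T,\vec x)$. For $W\subseteq\mathit{PS}$, $\exists W.\Phi$ denotes forgetting ($\exists\emptyset.\Phi\equiv\Phi$, $\exists\{v\}.\Phi\equiv\Phi(\neg v)\vee\Phi(v)$, iterated over the elements of $W$). A rectification operator $\star$ is a mapping associating with every classification circuit $\Sigma\in\mathcal{L}$ and every $T\in\mathcal{L}$ a circuit $\Sigma\star T\in\mathcal{L}$ such that: (RE1) $\Sigma\star T$ is a classification circuit; (RE2) if $\Sigma$ is fact-compliant with $T$ on $\vec x$, then $(\Sigma\star T)(\vec x)\equiv\Sigma(\vec x)$; (RE3) for every $\vec x$, $(\Sigma\star T)(\vec x)\models F(T,\vec x)$; (RE4) if $T$ is inconsistent then $\Sigma\star T\equiv\Sigma$; (RE5) if $\Sigma\equiv\Sigma'$ and $T\equiv T'$ then $\Sigma\star T\equiv\Sigma'\star T'$; (RE6) $\Sigma\star T\equiv(\exists W.\Sigma)\star(\exists W.T)$ where $W=\mathit{PS}\setminus(X\cup\{y\})$ (here $W=\emptyset$). *)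

theory Defs
  imports Main
begin

text \<open>Boolean circuits. Sharing in the DAG does not affect semantics, so circuits
are represented as syntax trees. Dec v M P is a decision node on v with low child M
and high child P.\<close>
datatype 'v circ = Var 'v | Top | Bot | Neg "'v circ" | And "'v circ" "'v circ"
  | Or "'v circ" "'v circ" | Dec 'v "'v circ" "'v circ"

fun vars :: "'v circ \<Rightarrow> 'v set" where
  "vars (Var v) = {v}"
| "vars Top = {}"
| "vars Bot = {}"
| "vars (Neg a) = vars a"
| "vars (And a b) = vars a \<union> vars b"
| "vars (Or a b) = vars a \<union> vars b"
| "vars (Dec v a b) = insert v (vars a \<union> vars b)"

fun eval :: "('v \<Rightarrow> bool) \<Rightarrow> 'v circ \<Rightarrow> bool" where
  "eval \<rho> (Var v) = \<rho> v"
| "eval \<rho> Top = True"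
| "eval \<rho> Bot = False"
| "eval \<rho> (Neg a) = (\<not> eval \<rho> a)"
| "eval \<rho> (And a b) = (eval \<rho> a \<and> eval \<rho> b)"
| "eval \<rho> (Or a b) = (eval \<rho> a \<or> eval \<rho> b)"
| "eval \<rho> (Dec v a b) = ((\<not> \<rho> v \<and> eval \<rho> a) \<or> (\<rho> v \<and> eval \<rho> b))"

definition circL :: "'v set \<Rightarrow> 'v \<Rightarrow> 'v circ set" where
  "circL X y = {\<Phi>. vars \<Phi> \<subseteq> insert y X}"

definition equiv :: "'v circ \<Rightarrow> 'v circ \<Rightarrow> bool" (infix "\<equiv>\<^sub>c" 50) where
  "\<Phi> \<equiv>\<^sub>c \<Psi> \<longleftrightarrow> (\<forall>\<rho>. eval \<rho> \<Phi> = eval \<rho> \<Psi>)"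

definition entails :: "'v circ \<Rightarrow> 'v circ \<Rightarrow> bool" (infix "\<Turnstile>\<^sub>c" 50) where
  "\<Phi> \<Turnstile>\<^sub>c \<Psi> \<longleftrightarrow> (\<forall>\<rho>. eval \<rho> \<Phi> \<longrightarrow> eval \<rho> \<Psi>)"

definition consistent :: "'v circ \<Rightarrow> bool" where
  "consistent \<Phi> \<longleftrightarrow> (\<exists>\<rho>. eval \<rho> \<Phi>)"

text \<open>Conditioning by the consistent term over the variables S whose polarity is
given by \<gamma>: every occurrence of a variable v \<in> S is replaced by Top/Bot; a decision
node on such a v thereby reduces to its high/low child.\<close>
fun cond :: "'v set \<Rightarrow> ('v \<Rightarrow> bool) \<Rightarrow> 'v circ \<Rightarrow> 'v circ" where
  "cond S \<gamma> (Var v) = (if v \<in> S then (if \<gamma> v then Top else Bot) else Var v)"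
| "cond S \<gamma> Top = Top"
| "cond S \<gamma> Bot = Bot"
| "cond S \<gamma> (Neg a) = Neg (cond S \<gamma> a)"
| "cond S \<gamma> (And a b) = And (cond S \<gamma> a) (cond S \<gamma> b)"
| "cond S \<gamma> (Or a b) = Or (cond S \<gamma> a) (cond S \<gamma> b)"
| "cond S \<gamma> (Dec v a b) = (if v \<in> S then (if \<gamma> v then cond S \<gamma> b else cond S \<gamma> a)
                           else Dec v (cond S \<gamma> a) (cond S \<gamma> b))"

text \<open>An instance x \<in> {0,1}^n is an assignment x of the variables in X (values
outside X are irrelevant); \<Phi>(x) is cond X x \<Phi>.\<close>
definition classifies :: "'v set \<Rightarrow> 'v \<Rightarrow> 'v circ \<Rightarrow> ('v \<Rightarrow> bool) \<Rightarrow> bool" where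
  "classifies X y \<Phi> x \<longleftrightarrow> (cond X x \<Phi> \<equiv>\<^sub>c Var y) \<or> (cond X x \<Phi> \<equiv>\<^sub>c Neg (Var y))"

definition classification_circuit :: "'v set \<Rightarrow> 'v \<Rightarrow> 'v circ \<Rightarrow> bool" where
  "classification_circuit X y \<Phi> \<longleftrightarrow> (\<forall>x. classifies X y \<Phi> x)"

definition Ffact :: "'v set \<Rightarrow> 'v \<Rightarrow> 'v circ \<Rightarrow> ('v \<Rightarrow> bool) \<Rightarrow> 'v circ" where
  "Ffact X y T x =
     (if \<not> consistent (cond X x T) then Top
      else And (if cond X x T \<Turnstile>\<^sub>c Var y then Var y else Top)
               (if cond X x T \<Turnstile>\<^sub>c Neg (Var y) then Neg (Var y) else Top))"

definition fact_compliant :: "'v set \<Rightarrow> 'v \<Rightarrow> 'v circ \<Rightarrow> 'v circ \<Rightarrow> ('v \<Rightarrow> bool) \<Rightarrow> bool" where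
  "fact_compliant X y \<Sigma> T x \<longleftrightarrow> cond X x \<Sigma> \<Turnstile>\<^sub>c Ffact X y T x"

fun forget :: "'v list \<Rightarrow> 'v circ \<Rightarrow> 'v circ" where
  "forget [] \<Phi> = \<Phi>"
| "forget (v # vs) \<Phi> = forget vs (Or (cond {v} (\<lambda>_. False) \<Phi>) (cond {v} (\<lambda>_. True) \<Phi>))"

definition rectification_operator ::
  "'v set \<Rightarrow> 'v \<Rightarrow> ('v circ \<Rightarrow> 'v circ \<Rightarrow> 'v circ) \<Rightarrow> bool" where
  "rectification_operator X y star \<longleftrightarrow>
    (\<forall>\<Sigma> T. \<Sigma> \<in> circL X y \<longrightarrow> classification_circuit X y \<Sigma> \<longrightarrow> T \<in> circL X y \<longrightarrow>
       star \<Sigma> T \<in> circL X y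
     \<and> classification_circuit X y (star \<Sigma> T)
     \<and> (\<forall>x. fact_compliant X y \<Sigma> T x \<longrightarrow> cond X x (star \<Sigma> T) \<equiv>\<^sub>c cond X x \<Sigma>)
     \<and> (\<forall>x. cond X x (star \<Sigma> T) \<Turnstile>\<^sub>c Ffact X y T x)
     \<and> (\<not> consistent T \<longrightarrow> star \<Sigma> T \<equiv>\<^sub>c \<Sigma>)
     \<and> (\<forall>\<Sigma>' T'. \<Sigma>' \<in> circL X y \<longrightarrow> classification_circuit X y \<Sigma>' \<longrightarrow> T' \<in> circL X y \<longrightarrow>
           \<Sigma> \<equiv>\<^sub>c \<Sigma>' \<longrightarrow> T \<equiv>\<^sub>c T' \<longrightarrow> star \<Sigma> T \<equiv>\<^sub>c star \<Sigma>' T')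
     \<and> (\<forall>ws. distinct ws \<longrightarrow> set ws = insert y X - (X \<union> {y}) \<longrightarrow>
           star \<Sigma> T \<equiv>\<^sub>c star (forget ws \<Sigma>) (forget ws T)))"

end

theory Submission
  imports Defs
begin

text \<open>For \<Phi> \<in> L and an instance x, the conditioning \<Phi>(x) mentions only y, so up to equivalence
it is determined by the set y_models X \<Phi> x of values of y satisfying it. \<Phi> classifies x iff
this set is a singleton, and \<Phi>(x) \<Turnstile> F(T,x) says that the models of \<Phi>(x) lie among those of T(x)
whenever T(x) has exactly one. Hence (RE1)--(RE3) pin down (\<Sigma> \<star> T)(x): if T(x) has a unique
model, so does (\<Sigma> \<star> T)(x), and it is the same one; otherwise \<Sigma> is vacuously fact-compliant
with T on x and (RE2) forces (\<Sigma> \<star> T)(x) \<equiv> \<Sigma>(x). As a circuit is determined up to equivalence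
by its conditionings on all instances, this gives uniqueness, and the circuit
"if T(x) \<equiv> y then y else if T(x) \<equiv> \<not>y then \<not>y else \<Sigma>" realises it.\<close>

lemma eval_cond: "eval \<rho> (cond S \<gamma> \<Phi>) = eval (\<lambda>v. if v \<in> S then \<gamma> v else \<rho> v) \<Phi>"
  by (induction \<Phi>) auto

lemma vars_cond: "vars (cond S \<gamma> \<Phi>) \<subseteq> vars \<Phi>"
  by (induction \<Phi>) auto

lemma eval_cong: "(\<And>v. v \<in> vars \<Phi> \<Longrightarrow> \<rho> v = \<rho>' v) \<Longrightarrow> eval \<rho> \<Phi> = eval \<rho>' \<Phi>"
  by (induction \<Phi>) auto

lemma eval_cond_self: "eval \<rho> (cond X \<rho> \<Phi>) = eval \<rho> \<Phi>"
  by (simp add: eval_cond)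

lemma equivI_cond: "(\<And>x. cond X x \<Phi> \<equiv>\<^sub>c cond X x \<Psi>) \<Longrightarrow> \<Phi> \<equiv>\<^sub>c \<Psi>"
  by (metis equiv_def eval_cond_self)

lemma all_assignment_at: "(\<forall>\<rho>::'v \<Rightarrow> bool. P (\<rho> y)) \<longleftrightarrow> (\<forall>b. P b)"
proof (intro iffI allI)
  fix b
  assume "\<forall>\<rho>::'v \<Rightarrow> bool. P (\<rho> y)"
  from spec[OF this, of "\<lambda>_. b"] show "P b" by simp
qed simp

lemma ex_assignment_at: "(\<exists>\<rho>::'v \<Rightarrow> bool. P (\<rho> y)) \<longleftrightarrow> (\<exists>b. P b)"
proof
  assume "\<exists>b. P b"
  then obtain b where "P b" ..
  then show "\<exists>\<rho>::'v \<Rightarrow> bool. P (\<rho> y)" by (intro exI[of _ "\<lambda>_. b"]) simp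
qed blast

lemma is_singleton_subset_eq: "is_singleton A \<Longrightarrow> is_singleton B \<Longrightarrow> A \<subseteq> B \<Longrightarrow> A = B"
  by (auto elim!: is_singletonE)

lemma bool_set_cases:
  fixes B :: "bool set"
  obtains "B = {}" | "B = {True}" | "B = {False}" | "B = UNIV"
  by (metis (full_types) UNIV_bool UNIV_eq_I insert_commute subset_insert subset_singletonD
      top_greatest)

definition y_models :: "'v set \<Rightarrow> 'v circ \<Rightarrow> ('v \<Rightarrow> bool) \<Rightarrow> bool set" where
  "y_models X \<Phi> x = {b. eval (\<lambda>v. if v \<in> X then x v else b) \<Phi>}"

lemma y_models_cong: "\<Phi> \<equiv>\<^sub>c \<Psi> \<Longrightarrow> y_models X \<Phi> x = y_models X \<Psi> x"
  by (simp add: y_models_def equiv_def)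

lemma y_models_restrict: "y_models X \<Phi> (\<lambda>v. if v \<in> X then x v else \<rho> v) = y_models X \<Phi> x"
  by (simp add: y_models_def)

lemma eval_cond_instance:
  assumes "\<Phi> \<in> circL X y" "y \<notin> X"
  shows "eval \<rho> (cond X x \<Phi>) \<longleftrightarrow> \<rho> y \<in> y_models X \<Phi> x"
  unfolding eval_cond y_models_def mem_Collect_eq
  by (rule eval_cong) (use assms in \<open>auto simp: circL_def\<close>)

lemma eval_cond_y:
  assumes "\<Phi> \<in> circL X y" "y \<notin> X"
  shows "eval \<rho> (cond {y} (\<lambda>_. b) \<Phi>) \<longleftrightarrow> b \<in> y_models X \<Phi> \<rho>"
  unfolding eval_cond y_models_def mem_Collect_eq
  by (rule eval_cong) (use assms in \<open>auto simp: circL_def\<close>)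

lemma cond_equiv_iff_y_models:
  assumes "\<Phi> \<in> circL X y" "\<Psi> \<in> circL X y" "y \<notin> X"
  shows "cond X x \<Phi> \<equiv>\<^sub>c cond X x \<Psi> \<longleftrightarrow> y_models X \<Phi> x = y_models X \<Psi> x"
  unfolding equiv_def eval_cond_instance[OF assms(1,3)] eval_cond_instance[OF assms(2,3)]
    all_assignment_at[where P = "\<lambda>b. (b \<in> _) = (b \<in> _)"]
  by (simp add: set_eq_iff)

lemma equivI_y_models:
  assumes "\<Phi> \<in> circL X y" "\<Psi> \<in> circL X y" "y \<notin> X"
    and "\<And>x. y_models X \<Phi> x = y_models X \<Psi> x"
  shows "\<Phi> \<equiv>\<^sub>c \<Psi>"
  by (rule equivI_cond[of X]) (simp only: cond_equiv_iff_y_models[OF assms(1-3)] assms(4))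

lemma classifies_iff_is_singleton:
  assumes "\<Phi> \<in> circL X y" "y \<notin> X"
  shows "classifies X y \<Phi> x \<longleftrightarrow> is_singleton (y_models X \<Phi> x)"
proof -
  have "cond X x \<Phi> \<equiv>\<^sub>c Var y \<longleftrightarrow> (\<forall>b. (b \<in> y_models X \<Phi> x) = b)"
    "cond X x \<Phi> \<equiv>\<^sub>c Neg (Var y) \<longleftrightarrow> (\<forall>b. (b \<in> y_models X \<Phi> x) = (\<not> b))"
    unfolding equiv_def eval_cond_instance[OF assms] eval.simps
    by (rule all_assignment_at)+
  then have "classifies X y \<Phi> x \<longleftrightarrow> y_models X \<Phi> x = {True} \<or> y_models X \<Phi> x = {False}"
    unfolding classifies_def by auto
  also have "\<dots> \<longleftrightarrow> is_singleton (y_models X \<Phi> x)"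
    by (metis (full_types) is_singleton_def)
  finally show ?thesis .
qed

lemma eval_Ffact:
  assumes "T \<in> circL X y" "y \<notin> X"
  shows "eval \<rho> (Ffact X y T x) \<longleftrightarrow> (is_singleton (y_models X T x) \<longrightarrow> \<rho> y \<in> y_models X T x)"
proof -
  have consistent: "consistent (cond X x T) \<longleftrightarrow> (\<exists>b. b \<in> y_models X T x)"
    unfolding consistent_def eval_cond_instance[OF assms] by (rule ex_assignment_at)
  have entails: "cond X x T \<Turnstile>\<^sub>c Var y \<longleftrightarrow> (\<forall>b. b \<in> y_models X T x \<longrightarrow> b)"
    "cond X x T \<Turnstile>\<^sub>c Neg (Var y) \<longleftrightarrow> (\<forall>b. b \<in> y_models X T x \<longrightarrow> \<not> b)"
    unfolding entails_def eval_cond_instance[OF assms] eval.simps by (rule all_assignment_at)+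
  show ?thesis
    unfolding Ffact_def consistent entails
    by (cases "y_models X T x" rule: bool_set_cases)
      (auto simp: UNIV_bool is_singleton_def doubleton_eq_iff)
qed

lemma cond_entails_Ffact_iff:
  assumes "\<Phi> \<in> circL X y" "T \<in> circL X y" "y \<notin> X"
  shows "cond X x \<Phi> \<Turnstile>\<^sub>c Ffact X y T x \<longleftrightarrow>
    (is_singleton (y_models X T x) \<longrightarrow> y_models X \<Phi> x \<subseteq> y_models X T x)"
  unfolding entails_def eval_cond_instance[OF assms(1,3)] eval_Ffact[OF assms(2,3)]
    all_assignment_at[where P = "\<lambda>b. b \<in> _ \<longrightarrow> (_ \<longrightarrow> b \<in> _)"]
  by (auto simp: subset_iff)

lemma y_models_rectification_operator:
  assumes "rectification_operator X y star" "y \<notin> X"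
    and "\<Sigma> \<in> circL X y" "classification_circuit X y \<Sigma>" "T \<in> circL X y"
  shows "y_models X (star \<Sigma> T) x =
    (if is_singleton (y_models X T x) then y_models X T x else y_models X \<Sigma> x)"
proof -
  have star_L: "star \<Sigma> T \<in> circL X y"
    and classification: "classification_circuit X y (star \<Sigma> T)"
    and RE2: "fact_compliant X y \<Sigma> T x \<Longrightarrow> cond X x (star \<Sigma> T) \<equiv>\<^sub>c cond X x \<Sigma>"
    and RE3: "cond X x (star \<Sigma> T) \<Turnstile>\<^sub>c Ffact X y T x"
    using assms(1,3-5) unfolding rectification_operator_def by blast+
  have star_singleton: "is_singleton (y_models X (star \<Sigma> T) x)"
    using classification star_L assms(2)
    by (simp add: classification_circuit_def classifies_iff_is_singleton)
  show ?thesis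
  proof (cases "is_singleton (y_models X T x)")
    case True
    then have "y_models X (star \<Sigma> T) x \<subseteq> y_models X T x"
      using RE3 star_L assms(2,5) by (simp add: cond_entails_Ffact_iff)
    with True star_singleton show ?thesis by (simp add: is_singleton_subset_eq)
  next
    case False
    then have "fact_compliant X y \<Sigma> T x"
      using assms(2,3,5) by (simp add: fact_compliant_def cond_entails_Ffact_iff)
    with False show ?thesis
      using RE2 star_L assms(2,3) by (simp add: cond_equiv_iff_y_models)
  qed
qed

lemma rectification_operator_unique:
  assumes "rectification_operator X y star" "rectification_operator X y star'" "y \<notin> X"
    and "\<Sigma> \<in> circL X y" "classification_circuit X y \<Sigma>" "T \<in> circL X y"
  shows "star \<Sigma> T \<equiv>\<^sub>c star' \<Sigma> T"
proof -
  have "star \<Sigma> T \<in> circL X y" "star' \<Sigma> T \<in> circL X y"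
    using assms(1,2,4-6) unfolding rectification_operator_def by blast+
  then show ?thesis
    using y_models_rectification_operator[OF assms(1,3-6)]
      y_models_rectification_operator[OF assms(2,3-6)]
    by (intro equivI_y_models[of _ X y]) (simp_all add: assms(3))
qed

definition Ite :: "'v circ \<Rightarrow> 'v circ \<Rightarrow> 'v circ \<Rightarrow> 'v circ" where
  "Ite c a b = Or (And c a) (And (Neg c) b)"

definition forces :: "'v \<Rightarrow> bool \<Rightarrow> 'v circ \<Rightarrow> 'v circ" where
  "forces y b T = And (cond {y} (\<lambda>_. b) T) (Neg (cond {y} (\<lambda>_. \<not> b) T))"

definition rectify :: "'v \<Rightarrow> 'v circ \<Rightarrow> 'v circ \<Rightarrow> 'v circ" where
  "rectify y \<Sigma> T = Ite (forces y True T) (Var y) (Ite (forces y False T) (Neg (Var y)) \<Sigma>)"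

lemma rectify_circL: "\<Sigma> \<in> circL X y \<Longrightarrow> T \<in> circL X y \<Longrightarrow> rectify y \<Sigma> T \<in> circL X y"
  using vars_cond[of "{y}" _ T] by (auto simp: circL_def rectify_def Ite_def forces_def)

lemma eval_forces:
  assumes "T \<in> circL X y" "y \<notin> X"
  shows "eval \<rho> (forces y b T) \<longleftrightarrow> y_models X T \<rho> = {b}"
  unfolding forces_def eval.simps eval_cond_y[OF assms]
  by (cases b) (auto simp: UNIV_bool; metis (full_types))+

lemma y_models_rectify:
  assumes "\<Sigma> \<in> circL X y" "T \<in> circL X y" "y \<notin> X"
  shows "y_models X (rectify y \<Sigma> T) x =
    (if is_singleton (y_models X T x) then y_models X T x else y_models X \<Sigma> x)"
proof (rule set_eqI)
  fix b
  let ?\<rho> = "\<lambda>v. if v \<in> X then x v else b"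
  have "y_models X T ?\<rho> = y_models X T x"
    using y_models_restrict[of X T x "\<lambda>_. b"] by simp
  moreover have "?\<rho> y = b" "eval ?\<rho> \<Sigma> \<longleftrightarrow> b \<in> y_models X \<Sigma> x"
    using assms(3) by (simp_all add: y_models_def)
  ultimately have "eval ?\<rho> (rectify y \<Sigma> T) \<longleftrightarrow>
    (if is_singleton (y_models X T x) then b \<in> y_models X T x else b \<in> y_models X \<Sigma> x)"
    unfolding rectify_def Ite_def eval.simps eval_forces[OF assms(2,3)]
    by (cases "y_models X T x" rule: bool_set_cases)
      (auto simp: UNIV_bool is_singleton_def doubleton_eq_iff)
  then show "b \<in> y_models X (rectify y \<Sigma> T) x \<longleftrightarrow>
    b \<in> (if is_singleton (y_models X T x) then y_models X T x else y_models X \<Sigma> x)"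
    by (simp add: y_models_def)
qed

lemma rectification_operator_rectify:
  assumes "y \<notin> X"
  shows "rectification_operator X y (rectify y)"
  unfolding rectification_operator_def
proof (intro allI impI conjI)
  fix \<Sigma> T
  assume \<Sigma>: "\<Sigma> \<in> circL X y" "classification_circuit X y \<Sigma>" and T: "T \<in> circL X y"
  have rectify_L: "rectify y \<Sigma> T \<in> circL X y"
    using \<Sigma>(1) T by (rule rectify_circL)
  note models = y_models_rectify[OF \<Sigma>(1) T assms]
  have \<Sigma>_singleton: "is_singleton (y_models X \<Sigma> x)" for x
    using \<Sigma> assms by (simp add: classification_circuit_def classifies_iff_is_singleton)
  show "rectify y \<Sigma> T \<in> circL X y"
    by (rule rectify_L)
  show "classification_circuit X y (rectify y \<Sigma> T)"
    using rectify_L assms \<Sigma>_singleton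
    by (simp add: classification_circuit_def classifies_iff_is_singleton models)
  show "cond X x (rectify y \<Sigma> T) \<equiv>\<^sub>c cond X x \<Sigma>" if "fact_compliant X y \<Sigma> T x" for x
  proof -
    have "is_singleton (y_models X T x) \<Longrightarrow> y_models X \<Sigma> x = y_models X T x"
      using that \<Sigma>(1) T assms \<Sigma>_singleton[of x]
      by (simp add: fact_compliant_def cond_entails_Ffact_iff is_singleton_subset_eq)
    then show ?thesis
      using rectify_L \<Sigma>(1) assms by (simp add: cond_equiv_iff_y_models models)
  qed
  show "cond X x (rectify y \<Sigma> T) \<Turnstile>\<^sub>c Ffact X y T x" for x
    using rectify_L T assms by (simp add: cond_entails_Ffact_iff models)
  show "rectify y \<Sigma> T \<equiv>\<^sub>c \<Sigma>" if "\<not> consistent T"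
  proof -
    have "y_models X T x = {}" for x
      using that by (auto simp: consistent_def y_models_def)
    then show ?thesis
      using rectify_L \<Sigma>(1) assms
      by (intro equivI_y_models[of _ X y]) (simp_all add: models is_singleton_def)
  qed
  show "rectify y \<Sigma> T \<equiv>\<^sub>c rectify y \<Sigma>' T'"
    if "\<Sigma>' \<in> circL X y" "T' \<in> circL X y" "\<Sigma> \<equiv>\<^sub>c \<Sigma>'" "T \<equiv>\<^sub>c T'" for \<Sigma>' T'
    using that rectify_L rectify_circL[OF that(1,2)] assms
    by (intro equivI_y_models[of _ X y]) (simp_all add: models y_models_rectify y_models_cong)
  show "rectify y \<Sigma> T \<equiv>\<^sub>c rectify y (forget ws \<Sigma>) (forget ws T)"
    if "set ws = insert y X - (X \<union> {y})" for ws
    using that by (simp add: equiv_def)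
qed

theorem proposition1:
  fixes X :: "'v set" and y :: 'v
  assumes "finite X" and "y \<notin> X"
  shows "(\<exists>star. rectification_operator X y star)
       \<and> (\<forall>star star'. rectification_operator X y star \<longrightarrow> rectification_operator X y star' \<longrightarrow>
            (\<forall>\<Sigma> T. \<Sigma> \<in> circL X y \<longrightarrow> classification_circuit X y \<Sigma> \<longrightarrow> T \<in> circL X y \<longrightarrow>
               star \<Sigma> T \<equiv>\<^sub>c star' \<Sigma> T))"
  using rectification_operator_rectify[OF assms(2)] rectification_operator_unique[OF _ _ assms(2)]
  by blast

end
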